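(* Let $\hat M_1,\dots,\hat M_N$ be real $d\times d$ matrices and $\mathcal L(U)=\sum_{n=1}^N\|{\rm low}(U^T\hat M_nU)\|^2$ for $U\in\mathbb O(d)$. If $U$ is a stationary point of $\mathcal L$ on $\mathbb O(d)$, then $S-S^T=0$, where $S=\sum_{n=1}^N\big[U^T\hat M_n^TU,\ {\rm low}(U^T\hat M_nU)\big]$.
   Context: $\|\cdot\|$ is the Frobenius norm; ${\rm low}(A)$ is the strictly lower-triangular part of $A$ ($[{\rm low}(A)]_{ij}=A_{ij}$ if $i>j$, else $0$); $[A,B]=AB-BA$. $\mathbb O(d)$ is the manifold of orthogonal matrices; $U$ is a stationary point if $\frac{d}{dt}\mathcal L(Ue^{tX})|_{t=0}=0$ for every skew-symmetric $X$. *)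

theory Defs
  imports "HOL-Analysis.Analysis"
begin

text \<open>Real d x d matrices are represented as real^('d::{finite,linorder})^('d::{finite,linorder}); the library norm on this
type is the Frobenius norm (square root of the sum of squared entries).\<close>

definition low :: "real^('d::{finite,linorder})^('d::{finite,linorder}) \<Rightarrow> real^('d::{finite,linorder})^('d::{finite,linorder})" where
  "low A = (\<chi> i j. if i > j then A $ i $ j else 0)"

definition mat_pow :: "real^('d::{finite,linorder})^('d::{finite,linorder}) \<Rightarrow> nat \<Rightarrow> real^('d::{finite,linorder})^('d::{finite,linorder})" where
  "mat_pow A k = ((\<lambda>B. B ** A) ^^ k) (mat 1)"

definition mat_exp :: "real^('d::{finite,linorder})^('d::{finite,linorder}) \<Rightarrow> real^('d::{finite,linorder})^('d::{finite,linorder})" where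
  "mat_exp A = (\<Sum>k. (1 / fact k) *\<^sub>R mat_pow A k)"

definition commutator :: "real^('d::{finite,linorder})^('d::{finite,linorder}) \<Rightarrow> real^('d::{finite,linorder})^('d::{finite,linorder}) \<Rightarrow> real^('d::{finite,linorder})^('d::{finite,linorder})" where
  "commutator A B = A ** B - B ** A"

definition skew :: "real^('d::{finite,linorder})^('d::{finite,linorder}) \<Rightarrow> bool" where
  "skew X \<longleftrightarrow> transpose X = - X"

definition Lfun :: "nat \<Rightarrow> (nat \<Rightarrow> real^('d::{finite,linorder})^('d::{finite,linorder})) \<Rightarrow> real^('d::{finite,linorder})^('d::{finite,linorder}) \<Rightarrow> real" where
  "Lfun N M U = (\<Sum>n\<in>{1..N}. (norm (low (transpose U ** M n ** U)))\<^sup>2)"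

end

theory Submission
  imports Defs
begin

text \<open>
  Along a curve \<open>E(t)\<close> through the identity with \<open>E'(0) = X\<close>, the summand
  \<open>\<parallel>low (E\<^sup>T A E)\<parallel>\<^sup>2\<close> of \<open>Lfun N M (U ** E(t))\<close>, where \<open>A = U\<^sup>T M U\<close>, has derivative
  \<open>2\<langle>low A, X\<^sup>T A + A X\<rangle> = 2\<langle>X, A (low A)\<^sup>T + A\<^sup>T low A\<rangle>\<close> (Frobenius inner product).
  Testing stationarity with the skew matrices \<open>E\<^sub>p\<^sub>q - E\<^sub>q\<^sub>p\<close> yields \<open>G - G\<^sup>T = 0\<close> for
  \<open>G = \<Sum>\<^sub>n A\<^sub>n (low A\<^sub>n)\<^sup>T + A\<^sub>n\<^sup>T low A\<^sub>n\<close>, and \<open>G - G\<^sup>T\<close> coincides with \<open>S - S\<^sup>T\<close> for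
  \<open>S = \<Sum>\<^sub>n [A\<^sub>n\<^sup>T, low A\<^sub>n]\<close>.
\<close>

type_synonym 'n sq_matrix = "real^'n^'n"

lemma bounded_bilinear_matrix_matrix_mult:
  "bounded_bilinear ((**) :: real^'n^'m \<Rightarrow> real^'p^'n \<Rightarrow> real^'p^'m)"
  unfolding bilinear_conv_bounded_bilinear[symmetric] bilinear_def
  by (auto intro!: linearI simp: matrix_add_ldistrib matrix_scalar_ac scalar_matrix_assoc
      vec_eq_iff matrix_matrix_mult_def sum.distrib distrib_left distrib_right
      sum_distrib_left mult_ac)

lemma mat_pow_Suc: "mat_pow A (Suc k) = mat_pow A k ** A"
  by (simp add: mat_pow_def)

lemma mat_pow_0: "mat_pow A 0 = mat 1"
  by (simp add: mat_pow_def)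

lemma mat_pow_scaleR: "mat_pow (t *\<^sub>R A) k = t ^ k *\<^sub>R mat_pow A k"
  by (induction k) (simp_all add: mat_pow_0 mat_pow_Suc matrix_scalar_ac scalar_matrix_assoc[symmetric])

lemma norm_mat_pow_le:
  fixes A :: "('n::{finite,linorder}) sq_matrix"
  assumes "K \<ge> 0"
    and mult_le: "\<And>(B::'n sq_matrix) (C::'n sq_matrix). norm (B ** C) \<le> norm B * norm C * K"
  shows "norm (mat_pow A k) \<le> norm (mat 1 :: 'n sq_matrix) * (K * norm A) ^ k"
proof (induction k)
  case 0 show ?case by (simp add: mat_pow_0)
next
  case (Suc k)
  have "norm (mat_pow A (Suc k)) \<le> norm (mat_pow A k) * (K * norm A)"
    using mult_le[of "mat_pow A k" A] by (simp add: mat_pow_Suc mult_ac)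
  also have "\<dots> \<le> norm (mat 1 :: 'n sq_matrix) * (K * norm A) ^ Suc k"
    using Suc.IH \<open>K \<ge> 0\<close> by (simp add: mult_left_mono mult_ac)
  finally show ?case .
qed

lemma summable_mat_exp_series:
  "summable (\<lambda>k. (1 / fact k) *\<^sub>R mat_pow (A :: ('n::{finite,linorder}) sq_matrix) k)"
proof -
  obtain K where "K > 0" and "\<And>(B::'n sq_matrix) (C::'n sq_matrix). norm (B ** C) \<le> norm B * norm C * K"
    using bounded_bilinear.pos_bounded[OF bounded_bilinear_matrix_matrix_mult] by blast
  note K = norm_mat_pow_le[OF less_imp_le[OF this(1)] this(2)]
  show ?thesis
  proof (rule summable_comparison_test'[OF summable_mult[OF summable_exp[of "K * norm A"]]])
    fix k :: nat
    show "norm ((1 / fact k) *\<^sub>R mat_pow A k)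
        \<le> norm (mat 1 :: 'n sq_matrix) * (inverse (fact k) * (K * norm A) ^ k)"
      using K[of A k] by (simp add: divide_simps mult_ac)
  qed
qed

lemma mat_exp_entry:
  "mat_exp A $ i $ j = (\<Sum>k. mat_pow A k $ i $ j / fact k)"
  using bounded_linear.suminf[OF bounded_linear_compose[OF bounded_linear_vec_nth bounded_linear_vec_nth]
      summable_mat_exp_series]
  by (simp add: mat_exp_def)

lemma has_vector_derivative_vec:
  fixes f :: "real \<Rightarrow> 'a::euclidean_space^'n"
  assumes "\<And>i. ((\<lambda>t. f t $ i) has_vector_derivative f' $ i) (at a within S)"
  shows "(f has_vector_derivative f') (at a within S)"
  unfolding has_vector_derivative_def has_derivative_componentwise_within[of f] Basis_vec_def
proof (clarsimp simp: inner_axis)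
  fix i and u :: 'a
  show "((\<lambda>t. f t $ i \<bullet> u) has_derivative (\<lambda>t. t * (f' $ i \<bullet> u))) (at a within S)"
    using bounded_linear.has_vector_derivative[OF bounded_linear_inner_left assms[of i]]
    by (simp add: has_vector_derivative_def inner_scaleR_left)
qed

lemma has_vector_derivative_matrix:
  fixes G :: "real \<Rightarrow> real^'n^'m"
  assumes "\<And>i j. ((\<lambda>t. G t $ i $ j) has_real_derivative G' $ i $ j) (at a within S)"
  shows "(G has_vector_derivative G') (at a within S)"
  using assms by (intro has_vector_derivative_vec) (simp add: has_real_derivative_iff_has_vector_derivative)

lemma mat_exp_0: "mat_exp 0 = mat 1"
proof -
  have "mat_pow 0 k = 0" if "k \<noteq> 0" for k
    using that by (cases k) (simp_all add: mat_pow_Suc)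
  then show ?thesis
    unfolding mat_exp_def by (subst suminf_finite[of "{0}"]) (auto simp: mat_pow_0)
qed

lemma mat_exp_scaleR_entry_has_real_derivative:
  "((\<lambda>t. mat_exp (t *\<^sub>R X) $ i $ j) has_real_derivative X $ i $ j) (at 0)"
proof -
  define c where "c k = mat_pow X k $ i $ j / fact k" for k
  have series: "mat_exp (t *\<^sub>R X) $ i $ j = (\<Sum>k. c k * t ^ k)" for t
    by (simp add: mat_exp_entry mat_pow_scaleR c_def mult.commute)
  have "summable (\<lambda>k. c k * t ^ k)" for t
    using bounded_linear.summable[OF bounded_linear_compose[OF bounded_linear_vec_nth bounded_linear_vec_nth]
        summable_mat_exp_series[of "t *\<^sub>R X"], of i j]
    by (simp add: mat_pow_scaleR c_def ac_simps)
  then have "((\<lambda>t. \<Sum>k. c k * t ^ k) has_real_derivative (\<Sum>k. diffs c k * 0 ^ k)) (at 0)"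
    by (rule termdiffs_strong_converges_everywhere)
  moreover have "(\<Sum>k. diffs c k * 0 ^ k) = X $ i $ j"
    unfolding powser_zero by (simp add: diffs_def c_def mat_pow_Suc mat_pow_0)
  ultimately show ?thesis
    by (simp add: series)
qed

lemma mat_exp_scaleR_has_vector_derivative:
  "((\<lambda>t. mat_exp (t *\<^sub>R X)) has_vector_derivative X) (at 0)"
  by (intro has_vector_derivative_matrix mat_exp_scaleR_entry_has_real_derivative)

lemma linear_transpose: "linear (transpose :: real^'n^'m \<Rightarrow> real^'m^'n)"
  by (auto intro!: linearI simp: vec_eq_iff transpose_def)

lemma has_vector_derivative_congruence:
  fixes G :: "real \<Rightarrow> real^'n^'m"
  assumes "(G has_vector_derivative G') (at t within S)"
  shows "((\<lambda>t. transpose (G t) ** A ** G t) has_vector_derivative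
           transpose (G t) ** A ** G' + transpose G' ** A ** G t) (at t within S)"
proof -
  have "bounded_linear (\<lambda>B :: real^'n^'m. transpose B ** A)"
    using bounded_linear_compose[OF bounded_bilinear.bounded_linear_left[OF bounded_bilinear_matrix_matrix_mult]
        linear_transpose[unfolded linear_conv_bounded_linear]] .
  from bounded_linear.has_vector_derivative[OF this assms]
  show ?thesis
    by (rule bounded_bilinear.has_vector_derivative[OF bounded_bilinear_matrix_matrix_mult _ assms])
qed

lemma linear_low: "linear (low :: ('n::{finite,linorder}) sq_matrix \<Rightarrow> 'n sq_matrix)"
  by (auto intro!: linearI simp: vec_eq_iff low_def)

lemma inner_low_low: "low A \<bullet> low B = low A \<bullet> (B :: ('n::{finite,linorder}) sq_matrix)"
  by (simp add: inner_vec_def low_def if_distrib if_distribR cong: if_cong)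

lemma inner_mult_transpose_left: "L \<bullet> (transpose X ** A) = X \<bullet> (A ** transpose (L :: real^'n^'n))"
  unfolding inner_vec_def matrix_matrix_mult_def transpose_def
  by (simp add: sum_distrib_left sum_distrib_right mult_ac) (subst sum.swap, subst sum.swap, rule refl)

lemma inner_mult_right: "L \<bullet> (A ** X) = X \<bullet> (transpose A ** (L :: real^'n^'n))"
  unfolding inner_vec_def matrix_matrix_mult_def transpose_def
  by (simp add: sum_distrib_left sum_distrib_right mult_ac)
    (subst sum.swap, subst (2) sum.swap, subst sum.swap, rule refl)

text \<open>Half the Euclidean gradient of \<open>E \<mapsto> \<parallel>low (E\<^sup>T A E)\<parallel>\<^sup>2\<close> at \<open>E = I\<close>.\<close>

definition low_sq_gradient :: "('n::{finite,linorder}) sq_matrix \<Rightarrow> 'n sq_matrix" where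
  "low_sq_gradient A = A ** transpose (low A) + transpose A ** low A"

lemma power2_norm_low_congruence_has_real_derivative:
  fixes G :: "real \<Rightarrow> ('n::{finite,linorder}) sq_matrix"
  assumes G': "(G has_vector_derivative G') (at 0)" and G0: "G 0 = mat 1"
  shows "((\<lambda>t. (norm (low (transpose (G t) ** A ** G t)))\<^sup>2) has_real_derivative
           2 * (G' \<bullet> low_sq_gradient A)) (at 0)"
proof -
  have "((\<lambda>t. low (transpose (G t) ** A ** G t)) has_vector_derivative
          low (A ** G' + transpose G' ** A)) (at 0)"
    using bounded_linear.has_vector_derivative[OF linear_low[unfolded linear_conv_bounded_linear]
        has_vector_derivative_congruence[OF G']]
    by (simp add: G0)
  from bounded_bilinear.has_vector_derivative[OF bounded_bilinear_inner this this]
  have "((\<lambda>t. (norm (low (transpose (G t) ** A ** G t)))\<^sup>2) has_real_derivative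
          2 * (low A \<bullet> (A ** G' + transpose G' ** A))) (at 0)"
    unfolding power2_norm_eq_inner has_real_derivative_iff_has_vector_derivative
    by (simp add: G0 inner_commute[of _ "low A"] inner_low_low)
  moreover have "low A \<bullet> (A ** G' + transpose G' ** A) = G' \<bullet> low_sq_gradient A"
    unfolding inner_add_right inner_mult_right[of "low A" A G'] inner_mult_transpose_left[of "low A" G' A]
    by (simp add: low_sq_gradient_def inner_add_right)
  ultimately show ?thesis
    by simp
qed

lemma low_sq_gradient_minus_transpose:
  fixes A :: "('n::{finite,linorder}) sq_matrix"
  defines "C \<equiv> commutator (transpose A) (low A)"
  shows "low_sq_gradient A - transpose (low_sq_gradient A) = C - transpose C"
  unfolding C_def low_sq_gradient_def commutator_def linear_add[OF linear_transpose]
    linear_diff[OF linear_transpose] matrix_transpose_mul transpose_transpose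
  by simp

lemma Lfun_mat_exp_has_real_derivative:
  fixes U X :: "('n::{finite,linorder}) sq_matrix"
  shows "((\<lambda>t. Lfun N M (U ** mat_exp (t *\<^sub>R X))) has_real_derivative
           2 * (X \<bullet> (\<Sum>n\<in>{1..N}. low_sq_gradient (transpose U ** M n ** U)))) (at 0)"
proof -
  have congruence: "transpose (U ** E) ** B ** (U ** E) = transpose E ** (transpose U ** B ** U) ** E"
    for E B :: "'n sq_matrix"
    by (simp add: matrix_transpose_mul matrix_mul_assoc)
  show ?thesis
    unfolding Lfun_def congruence inner_sum_right sum_distrib_left
    by (intro DERIV_sum power2_norm_low_congruence_has_real_derivative mat_exp_scaleR_has_vector_derivative)
      (simp add: mat_exp_0)
qed

text \<open>\<open>axis p (axis q 1)\<close> is the matrix unit \<open>E\<^sub>p\<^sub>q\<close>.\<close>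

lemma skew_axis_diff: "skew (axis p (axis q 1) - axis q (axis p 1) :: ('n::{finite,linorder}) sq_matrix)"
  by (auto simp: skew_def vec_eq_iff transpose_def axis_def)

lemma inner_axis_diff: "(axis p (axis q 1) - axis q (axis p 1)) \<bullet> B = (B - transpose B) $ p $ q"
  for B :: "real^'n^'n"
  by (simp add: inner_diff_left inner_axis' transpose_def)

theorem lemma5:
  fixes N :: nat and M :: "nat \<Rightarrow> real^('d::{finite,linorder})^('d::{finite,linorder})" and U :: "real^('d::{finite,linorder})^('d::{finite,linorder})"
  assumes orth: "orthogonal_matrix U"
    and stat: "\<And>X. skew X \<Longrightarrow>
       ((\<lambda>t. Lfun N M (U ** mat_exp (t *\<^sub>R X))) has_real_derivative 0) (at 0)"
  shows "let S = (\<Sum>n\<in>{1..N}. commutator (transpose U ** transpose (M n) ** U)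
                                         (low (transpose U ** M n ** U)))
         in S - transpose S = 0"
proof -
  define A where "A n = transpose U ** M n ** U" for n
  define S where "S = (\<Sum>n\<in>{1..N}. commutator (transpose (A n)) (low (A n)))"
  define G where "G = (\<Sum>n\<in>{1..N}. low_sq_gradient (A n))"
  have "X \<bullet> G = 0" if "skew X" for X
    using DERIV_unique[OF Lfun_mat_exp_has_real_derivative stat[OF that]] by (simp add: G_def A_def)
  then have "(G - transpose G) $ p $ q = 0" for p q
    using skew_axis_diff inner_axis_diff by metis
  then have "G - transpose G = 0"
    by (simp add: vec_eq_iff)
  moreover have "G - transpose G = S - transpose S"
    unfolding G_def S_def linear_sum[OF linear_transpose] sum_subtractf[symmetric]
    by (simp add: low_sq_gradient_minus_transpose)
  moreover have "transpose U ** transpose (M n) ** U = transpose (A n)" for n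
    by (simp add: A_def matrix_transpose_mul matrix_mul_assoc)
  ultimately show ?thesis
    by (simp add: S_def A_def)
qed

end
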